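(* Consider any realization of a run of Algorithm 4 (described in the context). For every $k\in\mathcal{K}$, \[ m_k(x_k)-m_k(x_k+s_k)\ \ge\ \tfrac14\,\epsilon_H\,\|s_k\|^2 . \]
   Context: Let $f:\mathbb{R}^n\to\mathbb{R}$ be twice continuously differentiable with gradient $g=\nabla f$ and Hessian $H=\nabla^2f$; $\|\cdot\|$ is the Euclidean norm, $\lambda_{\min}$ the smallest eigenvalue, $\mathbb{S}^n$ the real symmetric $n\times n$ matrices. Write $f_k=f(x_k)$, $g_k=g(x_k)$, $H_k=H(x_k)$, $m_k(x)=f_k+g_k^T(x-x_k)+\tfrac12(x-x_k)^TH_k(x-x_k)$. Exact arithmetic is assumed. Algorithm 2 (truncated CG; inputs nonzero $g$, $H\in\mathbb{S}^n$, $\epsilon>0$, $\delta>0$, $\zeta\in(0,1)$, flag capCG, and $M\ge\|H\|$): $k_{\max}=\min\{n,\tfrac12\sqrt{\kappa}\ln(4\kappa^{3/2}/\zeta)\}$ with $\kappa=(M+2\epsilon)/\epsilon$ if capCG is true, else $k_{\max}=n$. Set $y_0=0,r_0=g,p_0=-g,j=0$. While $j<k_{\max}$: if $p_j^T(H+2\epsilon I)p_j\le\epsilon\|p_j\|^2$, return $s=y_j+\sigma p_j$ with $\sigma\ge0$, $\|s\|=\delta$, flag BND-NEG; set $\alpha_j=\|r_j\|^2/(p_j^T(H+2\epsilon I)p_j)$, $y_{j+1}=y_j+\alpha_jp_j$; if $\|y_{j+1}\|\ge\delta$, return $s=y_j+\sigma p_j$ with $\sigma\ge0$, $\|s\|=\delta$,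 flag BND-NORM; set $r_{j+1}=r_j+\alpha_j(H+2\epsilon I)p_j$; if $\|r_{j+1}\|\le\tfrac\zeta2\min\{\|g\|,\epsilon\|y_{j+1}\|\}$, return $s=y_{j+1}$, flag INT-RES; set $\beta_{j+1}=\|r_{j+1}\|^2/\|r_j\|^2$, $p_{j+1}=-r_{j+1}+\beta_{j+1}p_j$, $j\leftarrow j+1$. On loop exit return $s=y_j$, flag INT-MAX. Algorithm 3 (minimum eigenvalue oracle, MEO; inputs $g$, $H\in\mathbb{S}^n$, $\epsilon>0$, $\delta>0$, $\xi\in(0,1)$, $M\ge\|H\|$): a possibly randomized procedure that either returns $s=\pm\delta v$ with $\|v\|=1$, $v^THv\le-\epsilon/2$, satisfying $g^Ts\le0$, $s^THs\le-\tfrac12\epsilon\|s\|^2$, $\|s\|=\delta$, or returns an indication that $H\succeq-\epsilon I$. Algorithm 4 (inexact trust-region Newton-CG). Inputs: $\epsilon_g,\epsilon_H>0$; $\gamma_1\in(0,1)$, $\gamma_2\ge1$, $\psi\in(1/\gamma_2,1]$; $x_0$; $\delta_0>0$; $\delta_{\max}\ge\delta_0$; $\eta\in(0,1)$; $\zeta\in(0,1)$; $\xi\in[0,1)$; capCG; $M\ge L_g$. For $k=0,1,\dots$: evaluate $g_k,H_k$. If $g_k\ne0$, call Algorithm 2 with $(g_k,H_k,\epsilon_H,\delta_k,\zeta,\text{capCG},M)$ obtaining $s_k^{CG}$ and flag outCG; else set $s_k^{CG}=0$, outCG$=$INT-RES. If outCG$\in\{$BND-NEG, BND-NORM$\}$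 or ($\|g_k\|>\epsilon_g$ and outCG$=$INT-RES), set $s_k=s_k^{CG}$. Otherwise call Algorithm 3 with $(g_k,H_k,\epsilon_H,\delta_k,\xi,M)$; if it indicates $H_k\succeq-\epsilon_HI$, return $x_k$ (terminate), else take its output as $s_k$. Set $\rho_k=\frac{f_k-f(x_k+s_k)}{m_k(x_k)-m_k(x_k+s_k)}$. If $\rho_k\ge\eta$: $x_{k+1}=x_k+s_k$ and $\delta_{k+1}=\min\{\gamma_2\delta_k,\delta_{\max}\}$ if $\|s_k\|\ge\psi\delta_k$, else $\delta_{k+1}=\delta_k$. If $\rho_k<\eta$: $x_{k+1}=x_k$, $\delta_{k+1}=\gamma_1\|s_k\|$. $\mathcal{K}$ is the set of indices $k$ such that iteration $k$ is completed without termination (for the given realization). *)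

theory Defs
  imports "HOL-Analysis.Analysis"
begin

section \<open>Algorithm 2: truncated (capped) CG\<close>

datatype cg_flag = BND_NEG | BND_NORM | INT_RES | INT_MAX

fun cg_seq :: "real^'n \<Rightarrow> real^'n^'n \<Rightarrow> nat \<Rightarrow> ((real^'n) \<times> (real^'n) \<times> (real^'n))" where
  "cg_seq g A 0 = (0, g, - g)"
| "cg_seq g A (Suc j) =
     (let (y, r, p) = cg_seq g A j;
          \<alpha> = (norm r)\<^sup>2 / (p \<bullet> (A *v p));
          y' = y + \<alpha> *\<^sub>R p;
          r' = r + \<alpha> *\<^sub>R (A *v p);
          \<beta> = (norm r')\<^sup>2 / (norm r)\<^sup>2
      in (y', r', - r' + \<beta> *\<^sub>R p))"

definition cg_y :: "real^'n \<Rightarrow> real^'n^'n \<Rightarrow> nat \<Rightarrow> real^'n" where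
  "cg_y g A j = fst (cg_seq g A j)"
definition cg_r :: "real^'n \<Rightarrow> real^'n^'n \<Rightarrow> nat \<Rightarrow> real^'n" where
  "cg_r g A j = fst (snd (cg_seq g A j))"
definition cg_p :: "real^'n \<Rightarrow> real^'n^'n \<Rightarrow> nat \<Rightarrow> real^'n" where
  "cg_p g A j = snd (snd (cg_seq g A j))"

definition cg_kmax :: "nat \<Rightarrow> real \<Rightarrow> real \<Rightarrow> bool \<Rightarrow> real \<Rightarrow> real" where
  "cg_kmax n \<epsilon> \<zeta> capCG M =
     (if capCG then
        (let \<kappa> = (M + 2 * \<epsilon>) / \<epsilon>
         in min (real n) (1/2 * sqrt \<kappa> * ln (4 * \<kappa> powr (3/2) / \<zeta>)))
      else real n)"

text \<open>The BND outputs are "s = y_j + sigma p_j with sigma >= 0 and norm s = delta", stated relationally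
  exactly as in the algorithm.\<close>
definition cg_output :: "real^'n \<Rightarrow> real^'n^'n \<Rightarrow> real \<Rightarrow> real \<Rightarrow> real \<Rightarrow> bool \<Rightarrow> real
      \<Rightarrow> real^'n \<Rightarrow> cg_flag \<Rightarrow> bool" where
  "cg_output g H \<epsilon> \<delta> \<zeta> capCG M s flag \<longleftrightarrow>
    (let A = H + (2 * \<epsilon>) *\<^sub>R mat 1;
         kmax = cg_kmax CARD('n) \<epsilon> \<zeta> capCG M;
         y = cg_y g A; r = cg_r g A; p = cg_p g A;
         negc = (\<lambda>j. p j \<bullet> (A *v p j) \<le> \<epsilon> * (norm (p j))\<^sup>2);
         normc = (\<lambda>j. norm (y (Suc j)) \<ge> \<delta>);
         resc = (\<lambda>j. norm (r (Suc j)) \<le> \<zeta> / 2 * min (norm g) (\<epsilon> * norm (y (Suc j))));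
         stopc = (\<lambda>j. negc j \<or> normc j \<or> resc j)
     in (\<exists>j. real j < kmax \<and> (\<forall>i<j. \<not> stopc i) \<and>
            ((negc j \<and> flag = BND_NEG \<and>
                (\<exists>\<sigma>\<ge>0. s = y j + \<sigma> *\<^sub>R p j \<and> norm s = \<delta>))
           \<or> (\<not> negc j \<and> normc j \<and> flag = BND_NORM \<and>
                (\<exists>\<sigma>\<ge>0. s = y j + \<sigma> *\<^sub>R p j \<and> norm s = \<delta>))
           \<or> (\<not> negc j \<and> \<not> normc j \<and> resc j \<and> flag = INT_RES \<and> s = y (Suc j))))
      \<or> ((\<forall>i. real i < kmax \<longrightarrow> \<not> stopc i) \<and> flag = INT_MAX \<and>
            s = y (nat \<lceil>kmax\<rceil>)))"

section \<open>Algorithm 3: minimum eigenvalue oracle (specification of a returned direction)\<close>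

definition meo_direction :: "real^'n \<Rightarrow> real^'n^'n \<Rightarrow> real \<Rightarrow> real \<Rightarrow> real^'n \<Rightarrow> bool" where
  "meo_direction g H \<epsilon> \<delta> s \<longleftrightarrow>
     (\<exists>v. norm v = 1 \<and> v \<bullet> (H *v v) \<le> - \<epsilon> / 2 \<and> (s = \<delta> *\<^sub>R v \<or> s = - (\<delta> *\<^sub>R v)) \<and>
          g \<bullet> s \<le> 0 \<and> s \<bullet> (H *v s) \<le> - (1/2) * \<epsilon> * (norm s)\<^sup>2 \<and> norm s = \<delta>)"

section \<open>Algorithm 4\<close>

definition tr_model :: "(real^'n \<Rightarrow> real) \<Rightarrow> (real^'n \<Rightarrow> real^'n) \<Rightarrow> (real^'n \<Rightarrow> real^'n^'n)
    \<Rightarrow> real^'n \<Rightarrow> real^'n \<Rightarrow> real" where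
  "tr_model f g H xk x = f xk + g xk \<bullet> (x - xk) + 1/2 * ((x - xk) \<bullet> (H xk *v (x - xk)))"

definition alg4_cg_phase :: "real^'n \<Rightarrow> real^'n^'n \<Rightarrow> real \<Rightarrow> real \<Rightarrow> real \<Rightarrow> bool \<Rightarrow> real
      \<Rightarrow> real^'n \<Rightarrow> cg_flag \<Rightarrow> bool" where
  "alg4_cg_phase gk Hk \<epsilon>H \<delta>k \<zeta> capCG M sCG outCG \<longleftrightarrow>
     (if gk \<noteq> 0 then cg_output gk Hk \<epsilon>H \<delta>k \<zeta> capCG M sCG outCG
      else sCG = 0 \<and> outCG = INT_RES)"

definition alg4_accept_cg :: "real^'n \<Rightarrow> real \<Rightarrow> cg_flag \<Rightarrow> bool" where
  "alg4_accept_cg gk \<epsilon>g outCG \<longleftrightarrow>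
     outCG \<in> {BND_NEG, BND_NORM} \<or> (norm gk > \<epsilon>g \<and> outCG = INT_RES)"

definition alg4_step :: "(real^'n \<Rightarrow> real^'n) \<Rightarrow> (real^'n \<Rightarrow> real^'n^'n) \<Rightarrow> real \<Rightarrow> real \<Rightarrow> real
     \<Rightarrow> bool \<Rightarrow> real \<Rightarrow> real^'n \<Rightarrow> real \<Rightarrow> real^'n \<Rightarrow> bool" where
  "alg4_step g H \<epsilon>g \<epsilon>H \<zeta> capCG M xk \<delta>k sk \<longleftrightarrow>
     (\<exists>sCG outCG. alg4_cg_phase (g xk) (H xk) \<epsilon>H \<delta>k \<zeta> capCG M sCG outCG \<and>
        (if alg4_accept_cg (g xk) \<epsilon>g outCG then sk = sCG
         else meo_direction (g xk) (H xk) \<epsilon>H \<delta>k sk))"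

text \<open>An iteration in which the MEO is called (it terminates iff the MEO reports H_k >= -eps_H I).\<close>
definition alg4_calls_meo :: "(real^'n \<Rightarrow> real^'n) \<Rightarrow> (real^'n \<Rightarrow> real^'n^'n) \<Rightarrow> real \<Rightarrow> real \<Rightarrow> real
     \<Rightarrow> bool \<Rightarrow> real \<Rightarrow> real^'n \<Rightarrow> real \<Rightarrow> bool" where
  "alg4_calls_meo g H \<epsilon>g \<epsilon>H \<zeta> capCG M xk \<delta>k \<longleftrightarrow>
     (\<exists>sCG outCG. alg4_cg_phase (g xk) (H xk) \<epsilon>H \<delta>k \<zeta> capCG M sCG outCG \<and>
        \<not> alg4_accept_cg (g xk) \<epsilon>g outCG)"

text \<open>A realization of a run of Algorithm 4: iterates x, radii delta, steps s, and the set K of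
  indices of iterations completed without termination.\<close>
definition alg4_run :: "(real^'n \<Rightarrow> real) \<Rightarrow> (real^'n \<Rightarrow> real^'n) \<Rightarrow> (real^'n \<Rightarrow> real^'n^'n)
    \<Rightarrow> real \<Rightarrow> real \<Rightarrow> real \<Rightarrow> real \<Rightarrow> real \<Rightarrow> real^'n \<Rightarrow> real \<Rightarrow> real \<Rightarrow> real \<Rightarrow> real
    \<Rightarrow> bool \<Rightarrow> real
    \<Rightarrow> (nat \<Rightarrow> real^'n) \<Rightarrow> (nat \<Rightarrow> real) \<Rightarrow> (nat \<Rightarrow> real^'n) \<Rightarrow> nat set \<Rightarrow> bool" where
  "alg4_run f g H \<epsilon>g \<epsilon>H \<gamma>1 \<gamma>2 \<psi> x0 \<delta>0 \<delta>max \<eta> \<zeta> capCG M x \<delta> s K \<longleftrightarrow>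
     x 0 = x0 \<and> \<delta> 0 = \<delta>0 \<and>
     (\<forall>k\<in>K. \<forall>i\<le>k. i \<in> K) \<and>
     (\<forall>k\<in>K.
        alg4_step g H \<epsilon>g \<epsilon>H \<zeta> capCG M (x k) (\<delta> k) (s k) \<and>
        (let \<rho> = (f (x k) - f (x k + s k)) /
                  (tr_model f g H (x k) (x k) - tr_model f g H (x k) (x k + s k))
         in if \<rho> \<ge> \<eta> then
              x (Suc k) = x k + s k \<and>
              \<delta> (Suc k) = (if norm (s k) \<ge> \<psi> * \<delta> k then min (\<gamma>2 * \<delta> k) \<delta>max else \<delta> k)
            else x (Suc k) = x k \<and> \<delta> (Suc k) = \<gamma>1 * norm (s k))) \<and>
     (\<forall>k. k \<notin> K \<and> (\<forall>i<k. i \<in> K) \<longrightarrow> alg4_calls_meo g H \<epsilon>g \<epsilon>H \<zeta> capCG M (x k) (\<delta> k))"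

end

theory Submission
  imports Defs
begin

text \<open>
  With \<open>A = H + 2\<epsilon>I\<close>, the truncated CG iterates satisfy the classical identities (residuals
  orthogonal to earlier directions, directions \<open>A\<close>-conjugate) for as long as every curvature
  \<open>p\<^sub>iA p\<^sub>i\<close> met so far is positive; this needs only symmetry of \<open>A\<close>, not definiteness.
  Consequently an interior iterate has \<open>g\<cdot>y = -yAy \<le> 0\<close>, and a boundary point
  \<open>y\<^sub>j + \<sigma>p\<^sub>j\<close> either lies on a direction of curvature at most \<open>\<epsilon>\<close> or has \<open>\<sigma>\<close> at most the
  CG step length, since \<open>\<sigma> \<mapsto> \<parallel>y\<^sub>j + \<sigma>p\<^sub>j\<parallel>\<close> increases. In every case the model built on
  \<open>A\<close> rises by at most \<open>\<epsilon>\<parallel>s\<parallel>\<^sup>2/2\<close>, so the model built on \<open>H = A - 2\<epsilon>I\<close> falls by at least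
  \<open>\<epsilon>\<parallel>s\<parallel>\<^sup>2/2\<close>; an eigenvalue-oracle step gives \<open>\<epsilon>\<parallel>s\<parallel>\<^sup>2/4\<close> directly. The Hessian is not
  assumed symmetric: symmetry follows from the twice differentiability of \<open>f\<close>, because the
  second difference quotient, which is symmetric in the two directions, converges to
  \<open>u\<cdot>H v\<close>.
\<close>

lemma second_difference_mean_value:
  fixes f :: "'a::real_inner \<Rightarrow> real" and g :: "'a \<Rightarrow> 'a"
  assumes grad: "\<And>x. (f has_derivative (\<lambda>h. g x \<bullet> h)) (at x)" and "0 < t"
  obtains \<tau> where "0 < \<tau>" "\<tau> < t"
    "f (y + t *\<^sub>R u + t *\<^sub>R v) - f (y + t *\<^sub>R u) - f (y + t *\<^sub>R v) + f y
       = t * ((g (y + (\<tau> *\<^sub>R u + t *\<^sub>R v)) - g (y + \<tau> *\<^sub>R u)) \<bullet> u)"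
proof -
  define \<phi> where "\<phi> = (\<lambda>s. f (y + t *\<^sub>R v + s *\<^sub>R u) - f (y + s *\<^sub>R u))"
  define \<phi>' where "\<phi>' = (\<lambda>s. g (y + t *\<^sub>R v + s *\<^sub>R u) \<bullet> u - g (y + s *\<^sub>R u) \<bullet> u)"
  have "(\<phi> has_real_derivative \<phi>' s) (at s)" for s
  proof -
    have "((\<lambda>s. f (w + s *\<^sub>R u)) has_derivative (\<lambda>h. g (w + s *\<^sub>R u) \<bullet> (h *\<^sub>R u))) (at s)" for w
      by (rule has_derivative_compose[of "\<lambda>s. w + s *\<^sub>R u" _ _ _ f, OF _ grad])
        (auto intro!: derivative_eq_intros)
    from has_derivative_diff[OF this[of "y + t *\<^sub>R v"] this[of y]]
    show ?thesis
      unfolding has_field_derivative_def \<phi>_def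
      by (rule has_derivative_eq_rhs) (auto simp: \<phi>'_def algebra_simps)
  qed
  then obtain \<tau> where "0 < \<tau>" "\<tau> < t" and "\<phi> t - \<phi> 0 = (t - 0) * \<phi>' \<tau>"
    using MVT2[of 0 t \<phi> \<phi>'] \<open>0 < t\<close> by auto
  then show ?thesis
    by (intro that[of \<tau>]) (simp_all add: \<phi>_def \<phi>'_def algebra_simps inner_diff_left)
qed

lemma second_difference_approx:
  fixes f :: "'a::real_inner \<Rightarrow> real" and g :: "'a \<Rightarrow> 'a"
  assumes grad: "\<And>x. (f has_derivative (\<lambda>h. g x \<bullet> h)) (at x)"
    and hess: "(g has_derivative g') (at y)" and "e > 0"
  shows "\<exists>d>0. \<forall>t. 0 < t \<and> t < d \<longrightarrow>
    \<bar>f (y + t *\<^sub>R u + t *\<^sub>R v) - f (y + t *\<^sub>R u) - f (y + t *\<^sub>R v) + f y - t\<^sup>2 * (u \<bullet> g' v)\<bar>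
      \<le> e * t\<^sup>2 * ((2 * norm u + norm v) * norm u)"
proof -
  from hess[unfolded has_derivative_at_alt] \<open>e > 0\<close> obtain d0 where "d0 > 0" and "linear g'"
    and lin_approx: "\<And>w. norm (w - y) < d0 \<Longrightarrow> norm (g w - g y - g' (w - y)) \<le> e * norm (w - y)"
    by (blast dest: bounded_linear.linear)
  define d where "d = d0 / (norm u + norm v + 1)"
  have "norm u + norm v + 1 > 0" by (simp add: add_nonneg_pos)
  then have "d > 0" using \<open>d0 > 0\<close> by (simp add: d_def)
  moreover have "\<bar>f (y + t *\<^sub>R u + t *\<^sub>R v) - f (y + t *\<^sub>R u) - f (y + t *\<^sub>R v) + f y - t\<^sup>2 * (u \<bullet> g' v)\<bar>
      \<le> e * t\<^sup>2 * ((2 * norm u + norm v) * norm u)" if t: "0 < t" "t < d" for t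
  proof -
    obtain \<tau> where \<tau>: "0 < \<tau>" "\<tau> < t" and mv:
      "f (y + t *\<^sub>R u + t *\<^sub>R v) - f (y + t *\<^sub>R u) - f (y + t *\<^sub>R v) + f y
         = t * ((g (y + (\<tau> *\<^sub>R u + t *\<^sub>R v)) - g (y + \<tau> *\<^sub>R u)) \<bullet> u)"
      using second_difference_mean_value[OF grad \<open>0 < t\<close>] by blast
    define w1 where "w1 = \<tau> *\<^sub>R u + t *\<^sub>R v"
    define w2 where "w2 = \<tau> *\<^sub>R u"
    define E1 where "E1 = g (y + w1) - g y - g' w1"
    define E2 where "E2 = g (y + w2) - g y - g' w2"
    have "norm w1 \<le> t * (norm u + norm v)"
      using \<tau> norm_triangle_ineq[of "\<tau> *\<^sub>R u" "t *\<^sub>R v"] mult_right_mono[of \<tau> t "norm u"] t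
      by (simp add: w1_def algebra_simps)
    moreover have "norm w2 \<le> t * norm u" and "t * norm u \<le> t * (norm u + norm v)"
      using \<tau> t by (simp_all add: w2_def mult_right_mono)
    moreover have "t * (norm u + norm v) < d0"
      using t \<open>norm u + norm v + 1 > 0\<close> by (simp add: d_def field_simps)
    ultimately have "norm E1 \<le> e * (t * (norm u + norm v))" and "norm E2 \<le> e * (t * norm u)"
      using lin_approx[of "y + w1"] lin_approx[of "y + w2"] \<open>e > 0\<close>
      by (auto simp: E1_def E2_def intro: order_trans mult_left_mono)
    then have "\<bar>(E1 - E2) \<bullet> u\<bar> \<le> e * t * ((2 * norm u + norm v) * norm u)"
      using Cauchy_Schwarz_ineq2[of "E1 - E2" u] norm_triangle_ineq4[of E1 E2]
        mult_right_mono[of "norm (E1 - E2)" "e * (t * (norm u + norm v)) + e * (t * norm u)" "norm u"]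
      by (simp add: algebra_simps)
    moreover have "g' w1 - g' w2 = t *\<^sub>R g' v"
      unfolding w1_def w2_def using \<open>linear g'\<close> by (simp add: linear_add linear_scale)
    then have "f (y + t *\<^sub>R u + t *\<^sub>R v) - f (y + t *\<^sub>R u) - f (y + t *\<^sub>R v) + f y - t\<^sup>2 * (u \<bullet> g' v)
        = t * ((E1 - E2) \<bullet> u)"
      unfolding mv E1_def E2_def w1_def w2_def
      by (simp add: algebra_simps inner_diff_left inner_commute[of u] power2_eq_square)
    ultimately show ?thesis
      using t by (simp add: abs_mult power2_eq_square mult_left_mono mult.assoc)
  qed
  ultimately show ?thesis by blast
qed

lemma second_difference_quotient_tendsto:
  fixes f :: "'a::real_inner \<Rightarrow> real" and g :: "'a \<Rightarrow> 'a"
  assumes grad: "\<And>x. (f has_derivative (\<lambda>h. g x \<bullet> h)) (at x)"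
    and hess: "(g has_derivative g') (at y)"
  shows "((\<lambda>t. (f (y + t *\<^sub>R u + t *\<^sub>R v) - f (y + t *\<^sub>R u) - f (y + t *\<^sub>R v) + f y) / t\<^sup>2)
           \<longlongrightarrow> u \<bullet> g' v) (at_right 0)"
proof (rule tendstoI)
  fix e :: real assume "e > 0"
  define C where "C = (2 * norm u + norm v) * norm u"
  have "C \<ge> 0" by (simp add: C_def)
  then have "e / (2 * (C + 1)) > 0" using \<open>e > 0\<close> by simp
  from second_difference_approx[OF grad hess this]
  obtain d where "d > 0" and d: "\<And>t. 0 < t \<Longrightarrow> t < d \<Longrightarrow>
      \<bar>f (y + t *\<^sub>R u + t *\<^sub>R v) - f (y + t *\<^sub>R u) - f (y + t *\<^sub>R v) + f y - t\<^sup>2 * (u \<bullet> g' v)\<bar>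
        \<le> e / (2 * (C + 1)) * t\<^sup>2 * C"
    unfolding C_def by blast
  show "\<forall>\<^sub>F t in at_right 0.
      dist ((f (y + t *\<^sub>R u + t *\<^sub>R v) - f (y + t *\<^sub>R u) - f (y + t *\<^sub>R v) + f y) / t\<^sup>2) (u \<bullet> g' v) < e"
    using eventually_at_right_real[OF \<open>d > 0\<close>]
  proof (rule eventually_mono)
    fix t assume "t \<in> {0<..<d}"
    then have t: "0 < t" "t < d" by auto
    let ?D = "f (y + t *\<^sub>R u + t *\<^sub>R v) - f (y + t *\<^sub>R u) - f (y + t *\<^sub>R v) + f y"
    have "dist (?D / t\<^sup>2) (u \<bullet> g' v) = \<bar>?D - t\<^sup>2 * (u \<bullet> g' v)\<bar> / t\<^sup>2"
      using t by (simp add: dist_real_def field_simps)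
    also have "\<dots> \<le> e / (2 * (C + 1)) * C"
      using d[OF t] t by (simp add: pos_divide_le_eq mult_ac)
    also have "\<dots> = e * (C / (2 * (C + 1)))" by simp
    also have "\<dots> < e * 1"
      using \<open>e > 0\<close> \<open>C \<ge> 0\<close> by (intro mult_strict_left_mono) (simp_all add: pos_divide_less_eq)
    finally show "dist (?D / t\<^sup>2) (u \<bullet> g' v) < e" by simp
  qed
qed

theorem second_derivative_symmetric:
  fixes f :: "'a::real_inner \<Rightarrow> real" and g :: "'a \<Rightarrow> 'a"
  assumes grad: "\<And>x. (f has_derivative (\<lambda>h. g x \<bullet> h)) (at x)"
    and hess: "(g has_derivative g') (at y)"
  shows "u \<bullet> g' v = v \<bullet> g' u"
proof -
  let ?Q = "\<lambda>u v t. (f (y + t *\<^sub>R u + t *\<^sub>R v) - f (y + t *\<^sub>R u) - f (y + t *\<^sub>R v) + f y) / t\<^sup>2"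
  have "y + t *\<^sub>R v + t *\<^sub>R u = y + t *\<^sub>R u + t *\<^sub>R v" for t :: real
    by (simp add: algebra_simps)
  then have "?Q v u = ?Q u v"
    by (intro ext) (simp add: field_simps)
  then have "(?Q u v \<longlongrightarrow> v \<bullet> g' u) (at_right 0)"
    using second_difference_quotient_tendsto[OF grad hess, of v u] by simp
  with second_difference_quotient_tendsto[OF grad hess, of u v]
  show ?thesis
    by (rule tendsto_unique[OF trivial_limit_at_right_real])
qed

lemma norm_le_norm_add_if_inner_nonneg:
  fixes x v :: "'a::real_inner"
  assumes "0 \<le> x \<bullet> v"
  shows "norm v \<le> norm (x + v)"
  using assms by (simp add: norm_le inner_add_left inner_add_right inner_commute[of v x])

lemma norm_add_scaleR_strict_mono:
  fixes x v :: "'a::real_inner"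
  assumes "0 \<le> x \<bullet> v" and "v \<noteq> 0" and "0 \<le> s" and "s < t"
  shows "norm (x + s *\<^sub>R v) < norm (x + t *\<^sub>R v)"
proof -
  have "s * (x \<bullet> v) \<le> t * (x \<bullet> v)"
    using assms by (simp add: mult_right_mono)
  moreover have "s * s * (v \<bullet> v) < t * t * (v \<bullet> v)"
    using assms by (simp add: mult_strict_mono)
  ultimately show ?thesis
    by (simp add: norm_lt inner_add_left inner_add_right inner_commute[of v x] algebra_simps)
qed

lemma cg_iterates_0 [simp]: "cg_y g A 0 = 0" "cg_r g A 0 = g" "cg_p g A 0 = - g"
  by (simp_all add: cg_y_def cg_r_def cg_p_def)

lemma cg_iterates_Suc:
  "cg_y g A (Suc j) = cg_y g A j + ((norm (cg_r g A j))\<^sup>2 / (cg_p g A j \<bullet> (A *v cg_p g A j))) *\<^sub>R cg_p g A j"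
  "cg_r g A (Suc j) = cg_r g A j + ((norm (cg_r g A j))\<^sup>2 / (cg_p g A j \<bullet> (A *v cg_p g A j))) *\<^sub>R (A *v cg_p g A j)"
  "cg_p g A (Suc j) = - cg_r g A (Suc j) + ((norm (cg_r g A (Suc j)))\<^sup>2 / (norm (cg_r g A j))\<^sup>2) *\<^sub>R cg_p g A j"
  by (simp_all add: cg_y_def cg_r_def cg_p_def Let_def split: prod.splits)

definition cg_positive_curvature :: "real^'n \<Rightarrow> real^'n^'n \<Rightarrow> nat \<Rightarrow> bool" where
  "cg_positive_curvature g A N \<longleftrightarrow> (\<forall>i<N. 0 < cg_p g A i \<bullet> (A *v cg_p g A i))"

lemma cg_positive_curvature_Suc:
  "cg_positive_curvature g A (Suc N) \<longleftrightarrow>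
     cg_positive_curvature g A N \<and> 0 < cg_p g A N \<bullet> (A *v cg_p g A N)"
  by (auto simp: cg_positive_curvature_def less_Suc_eq)

locale cg_symmetric =
  fixes g :: "real^'n" and A :: "real^'n^'n"
  assumes symmetric: "\<And>u v. u \<bullet> (A *v v) = v \<bullet> (A *v u)"
begin

abbreviation "y \<equiv> cg_y g A"
abbreviation "r \<equiv> cg_r g A"
abbreviation "p \<equiv> cg_p g A"
abbreviation "curv j \<equiv> p j \<bullet> (A *v p j)"
abbreviation "\<alpha> j \<equiv> (norm (r j))\<^sup>2 / curv j"
abbreviation "pos N \<equiv> cg_positive_curvature g A N"

lemma quadratic_form_add_scaleR:
  "(u + c *\<^sub>R v) \<bullet> (A *v (u + c *\<^sub>R v))
     = u \<bullet> (A *v u) + 2 * c * (u \<bullet> (A *v v)) + c\<^sup>2 * (v \<bullet> (A *v v))"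
  using symmetric[of v u]
  by (simp add: matrix_vector_right_distrib matrix_vector_mult_scaleR inner_add_left inner_add_right
      power2_eq_square algebra_simps)

lemma residual_eq: "r j = A *v y j + g"
  by (induction j) (simp_all add: cg_iterates_Suc matrix_vector_right_distrib matrix_vector_mult_scaleR)

lemma direction_eq_0_if_residual_eq_0: "r j = 0 \<Longrightarrow> p j = 0"
  by (cases j) (simp_all add: cg_iterates_Suc)

lemma step_length_pos:
  assumes "0 < curv j"
  shows "0 < \<alpha> j"
  using assms direction_eq_0_if_residual_eq_0[of j] by fastforce

lemma inner_residual_Suc: "r (Suc j) \<bullet> v = r j \<bullet> v + \<alpha> j * (p j \<bullet> (A *v v))"
  by (simp add: cg_iterates_Suc inner_add_left inner_commute[of "A *v p j"] symmetric[of v])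

lemma A_mult_direction_eq:
  assumes "0 < curv j"
  shows "A *v p j = (1 / \<alpha> j) *\<^sub>R (r (Suc j) - r j)"
proof -
  have "r (Suc j) - r j = \<alpha> j *\<^sub>R (A *v p j)" by (simp add: cg_iterates_Suc)
  moreover have "w = (1 / c) *\<^sub>R (c *\<^sub>R w)" if "c \<noteq> 0" for c :: real and w :: "real^'n"
    using that by simp
  ultimately show ?thesis using step_length_pos[OF assms] by (metis less_irrefl)
qed

lemma inner_residual_eq_0_if_inner_directions_eq_0:
  assumes "\<forall>i\<le>N. v \<bullet> p i = 0" and "i \<le> N"
  shows "v \<bullet> r i = 0"
proof (cases i)
  case 0
  have "v \<bullet> p 0 = 0" using assms(1) by blast
  then show ?thesis using 0 by simp
next
  case (Suc k)
  define c where "c = (norm (r i))\<^sup>2 / (norm (r k))\<^sup>2"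
  have "r i = - p i + c *\<^sub>R p k"
    unfolding c_def Suc by (simp add: cg_iterates_Suc)
  then have "v \<bullet> r i = - (v \<bullet> p i) + c * (v \<bullet> p k)"
    by (simp add: inner_add_right inner_diff_right)
  moreover have "v \<bullet> p i = 0" "v \<bullet> p k = 0"
    using assms Suc by auto
  ultimately show ?thesis by simp
qed

lemma residual_Suc_orthogonal:
  assumes "0 < curv N" and "r N \<bullet> p N = - (norm (r N))\<^sup>2"
    and "\<forall>i<N. r N \<bullet> p i = 0 \<and> p N \<bullet> (A *v p i) = 0" and "i \<le> N"
  shows "r (Suc N) \<bullet> p i = 0"
proof (cases "i = N")
  case True
  have "r (Suc N) \<bullet> p N = r N \<bullet> p N + \<alpha> N * curv N" by (rule inner_residual_Suc)
  then show ?thesis using True assms(1,2) by simp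
next
  case False
  then show ?thesis using assms(3,4) by (simp add: inner_residual_Suc)
qed

lemma direction_Suc_conjugate:
  assumes "pos (Suc N)" and "\<forall>i\<le>N. r (Suc N) \<bullet> r i = 0"
    and "\<forall>i<N. p N \<bullet> (A *v p i) = 0" and "i \<le> N"
  shows "p (Suc N) \<bullet> (A *v p i) = 0"
proof -
  have curv: "0 < curv k" if "k \<le> N" for k
    using assms(1) that by (simp add: cg_positive_curvature_def)
  have residual: "r (Suc N) \<bullet> (A *v p k) = (1 / \<alpha> k) * (r (Suc N) \<bullet> r (Suc k) - r (Suc N) \<bullet> r k)"
    if "k \<le> N" for k
    using arg_cong[OF A_mult_direction_eq[OF curv[OF that]], of "inner (r (Suc N))"]
    by (simp only: inner_scaleR_right inner_diff_right)
  have "p (Suc N) \<bullet> (A *v p i) = - (r (Suc N) \<bullet> (A *v p i))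
      + ((norm (r (Suc N)))\<^sup>2 / (norm (r N))\<^sup>2) * (p N \<bullet> (A *v p i))"
    by (simp only: cg_iterates_Suc(3) inner_add_left inner_minus_left inner_scaleR_left)
  also have "\<dots> = 0"
  proof (cases "i = N")
    case True
    have "p N \<noteq> 0" using curv[of N] by auto
    then have "r N \<noteq> 0" using direction_eq_0_if_residual_eq_0 by blast
    have "r (Suc N) \<bullet> (A *v p N) = (1 / \<alpha> N) * (norm (r (Suc N)))\<^sup>2"
      using residual[of N] assms(2) by (simp add: power2_norm_eq_inner)
    moreover have "(norm (r (Suc N)))\<^sup>2 / (norm (r N))\<^sup>2 * curv N = (1 / \<alpha> N) * (norm (r (Suc N)))\<^sup>2"
      using \<open>r N \<noteq> 0\<close> curv[of N] by (simp add: field_simps)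
    ultimately show ?thesis using True by simp
  next
    case False
    then show ?thesis using residual[of i] assms(2-4) by simp
  qed
  finally show ?thesis .
qed

theorem cg_orthogonality:
  assumes "pos N"
  shows "r N \<bullet> p N = - (norm (r N))\<^sup>2 \<and> (\<forall>i<N. r N \<bullet> p i = 0 \<and> p N \<bullet> (A *v p i) = 0)"
  using assms
proof (induction N)
  case 0
  then show ?case by (simp add: power2_norm_eq_inner)
next
  case (Suc N)
  have curv: "0 < curv N" and "pos N"
    using Suc.prems by (simp_all add: cg_positive_curvature_Suc)
  then have IH: "r N \<bullet> p N = - (norm (r N))\<^sup>2" "\<forall>i<N. r N \<bullet> p i = 0 \<and> p N \<bullet> (A *v p i) = 0"
    using Suc.IH by simp_all
  have orth: "\<forall>i\<le>N. r (Suc N) \<bullet> p i = 0"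
    using residual_Suc_orthogonal[OF curv IH] by simp
  then have "\<forall>i\<le>N. r (Suc N) \<bullet> r i = 0"
    using inner_residual_eq_0_if_inner_directions_eq_0 by simp
  moreover have "\<forall>i<N. p N \<bullet> (A *v p i) = 0"
    using IH(2) by simp
  ultimately have conj: "\<forall>i\<le>N. p (Suc N) \<bullet> (A *v p i) = 0"
    using direction_Suc_conjugate[OF Suc.prems] by simp
  have "r (Suc N) \<bullet> p (Suc N)
      = - (r (Suc N) \<bullet> r (Suc N)) + ((norm (r (Suc N)))\<^sup>2 / (norm (r N))\<^sup>2) * (r (Suc N) \<bullet> p N)"
    by (simp only: cg_iterates_Suc(3) inner_add_right inner_minus_right inner_scaleR_right)
  then have "r (Suc N) \<bullet> p (Suc N) = - (norm (r (Suc N)))\<^sup>2"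
    using orth by (simp add: power2_norm_eq_inner)
  with orth conj show ?case by (simp add: less_Suc_eq_le)
qed

lemma iterate_orthogonal:
  assumes "pos k" and "j \<le> k"
  shows "y j \<bullet> (A *v p k) = 0 \<and> y j \<bullet> r k = 0"
  using assms(2)
proof (induction j)
  case 0
  then show ?case by simp
next
  case (Suc j)
  then have "j < k" by simp
  with cg_orthogonality[OF assms(1)] have "r k \<bullet> p j = 0" "p k \<bullet> (A *v p j) = 0"
    by auto
  then have "p j \<bullet> (A *v p k) = 0" "p j \<bullet> r k = 0"
    using symmetric[of "p j" "p k"] by (simp_all add: inner_commute)
  moreover have "y j \<bullet> (A *v p k) = 0 \<and> y j \<bullet> r k = 0"
    using Suc \<open>j < k\<close> by simp
  ultimately show ?case by (simp add: cg_iterates_Suc(1) inner_add_left)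
qed

lemma iterate_curvature_nonneg:
  assumes "pos j"
  shows "0 \<le> y j \<bullet> (A *v y j)"
  using assms
proof (induction j)
  case 0
  then show ?case by simp
next
  case (Suc j)
  then have "pos j" and "0 < curv j"
    by (simp_all add: cg_positive_curvature_Suc)
  have "y j \<bullet> (A *v p j) = 0"
    using iterate_orthogonal[OF \<open>pos j\<close>] by simp
  then have "y (Suc j) \<bullet> (A *v y (Suc j)) = y j \<bullet> (A *v y j) + (\<alpha> j)\<^sup>2 * curv j"
    by (simp add: cg_iterates_Suc(1) quadratic_form_add_scaleR)
  then show ?case
    using Suc.IH[OF \<open>pos j\<close>] \<open>0 < curv j\<close> by simp
qed

lemma iterate_inner_direction_nonneg:
  assumes "pos j"
  shows "0 \<le> y j \<bullet> p j"
  using assms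
proof (induction j)
  case 0
  then show ?case by simp
next
  case (Suc j)
  then have "pos j" and "0 < curv j"
    by (simp_all add: cg_positive_curvature_Suc)
  define \<beta> where "\<beta> = (norm (r (Suc j)))\<^sup>2 / (norm (r j))\<^sup>2"
  have p_Suc: "p (Suc j) = - r (Suc j) + \<beta> *\<^sub>R p j"
    unfolding \<beta>_def by (rule cg_iterates_Suc(3))
  have "y j \<bullet> r (Suc j) = 0"
    using iterate_orthogonal[OF Suc.prems] by simp
  moreover have "p j \<bullet> r (Suc j) = 0"
    using cg_orthogonality[OF Suc.prems] by (simp add: inner_commute)
  ultimately have eq: "y (Suc j) \<bullet> p (Suc j) = \<beta> * (y j \<bullet> p j) + \<alpha> j * \<beta> * (p j \<bullet> p j)"
    unfolding cg_iterates_Suc(1) p_Suc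
    by (simp add: inner_add_left inner_add_right algebra_simps)
  have "0 \<le> \<beta>" "0 < \<alpha> j"
    using step_length_pos[OF \<open>0 < curv j\<close>] by (simp_all add: \<beta>_def)
  then have "0 \<le> \<beta> * (y j \<bullet> p j)" "0 \<le> \<alpha> j * \<beta> * (p j \<bullet> p j)"
    using Suc.IH[OF \<open>pos j\<close>] by (metis inner_ge_zero less_imp_le mult_nonneg_nonneg)+
  then show ?case
    unfolding eq by (rule add_nonneg_nonneg)
qed

lemma interior_model_nonpos:
  assumes "pos N"
  shows "g \<bullet> y N + 1/2 * (y N \<bullet> (A *v y N)) \<le> 0"
proof -
  have "g \<bullet> y N = r N \<bullet> y N - (A *v y N) \<bullet> y N"
    by (simp add: residual_eq inner_add_left)
  also have "\<dots> = - (y N \<bullet> (A *v y N))"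
    using iterate_orthogonal[OF assms] by (simp add: inner_commute)
  finally show ?thesis
    using iterate_curvature_nonneg[OF assms] by simp
qed

lemma boundary_curvature_bound:
  assumes "pos j" and "0 \<le> \<epsilon>" and "0 \<le> \<sigma>"
    and stop: "curv j \<le> \<epsilon> * (norm (p j))\<^sup>2
      \<or> (0 < curv j \<and> norm (y j + \<sigma> *\<^sub>R p j) \<le> norm (y (Suc j)))"
  shows "\<sigma>\<^sup>2 * curv j \<le> \<epsilon> * (norm (y j + \<sigma> *\<^sub>R p j))\<^sup>2 + 2 * \<sigma> * (norm (r j))\<^sup>2"
proof -
  have yp: "0 \<le> y j \<bullet> (\<sigma> *\<^sub>R p j)"
    using iterate_inner_direction_nonneg[OF assms(1)] \<open>0 \<le> \<sigma>\<close> by simp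
  have rest: "0 \<le> \<epsilon> * (norm (y j + \<sigma> *\<^sub>R p j))\<^sup>2" "0 \<le> 2 * \<sigma> * (norm (r j))\<^sup>2"
    using assms(2,3) by simp_all
  from stop show ?thesis
  proof
    assume neg: "curv j \<le> \<epsilon> * (norm (p j))\<^sup>2"
    have "\<sigma>\<^sup>2 * curv j \<le> \<epsilon> * (norm (\<sigma> *\<^sub>R p j))\<^sup>2"
      using mult_left_mono[OF neg, of "\<sigma>\<^sup>2"] by (simp add: power_mult_distrib algebra_simps)
    also have "\<dots> \<le> \<epsilon> * (norm (y j + \<sigma> *\<^sub>R p j))\<^sup>2"
      using norm_le_norm_add_if_inner_nonneg[OF yp] \<open>0 \<le> \<epsilon>\<close>
      by (simp add: mult_left_mono power_mono)
    finally show ?thesis using rest(2) by simp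
  next
    assume "0 < curv j \<and> norm (y j + \<sigma> *\<^sub>R p j) \<le> norm (y (Suc j))"
    then have curv: "0 < curv j" and short: "norm (y j + \<sigma> *\<^sub>R p j) \<le> norm (y j + \<alpha> j *\<^sub>R p j)"
      by (simp_all add: cg_iterates_Suc(1))
    have "p j \<noteq> 0" and "0 \<le> \<alpha> j"
      using curv step_length_pos[OF curv] by auto
    then have "\<sigma> \<le> \<alpha> j"
      using norm_add_scaleR_strict_mono[of "y j" "p j" "\<alpha> j" \<sigma>] short
        iterate_inner_direction_nonneg[OF assms(1)]
      by (meson leD not_le)
    then have "\<sigma>\<^sup>2 * curv j \<le> \<sigma> * \<alpha> j * curv j"
      using \<open>0 \<le> \<sigma>\<close> curv unfolding power2_eq_square by (intro mult_right_mono mult_left_mono) auto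
    also have "\<dots> = \<sigma> * (norm (r j))\<^sup>2"
      using curv by simp
    finally show ?thesis using rest by simp
  qed
qed

lemma boundary_model_bound:
  assumes "pos j" and "0 \<le> \<epsilon>" and "0 \<le> \<sigma>" and s: "s = y j + \<sigma> *\<^sub>R p j"
    and stop: "curv j \<le> \<epsilon> * (norm (p j))\<^sup>2 \<or> (0 < curv j \<and> norm s \<le> norm (y (Suc j)))"
  shows "g \<bullet> s + 1/2 * (s \<bullet> (A *v s)) \<le> \<epsilon> / 2 * (norm s)\<^sup>2"
proof -
  have orth: "y j \<bullet> (A *v p j) = 0" "r j \<bullet> y j = 0"
    using iterate_orthogonal[OF assms(1)] by (simp_all add: inner_commute)
  have "g \<bullet> s = r j \<bullet> s - (A *v y j) \<bullet> s"
    by (simp add: residual_eq inner_add_left)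
  also have "\<dots> = - (y j \<bullet> (A *v y j)) - \<sigma> * (norm (r j))\<^sup>2"
    using orth cg_orthogonality[OF assms(1)] symmetric[of "y j" "p j"]
    by (simp add: s inner_add_right inner_commute[of "A *v y j"])
  finally have "g \<bullet> s = - (y j \<bullet> (A *v y j)) - \<sigma> * (norm (r j))\<^sup>2" .
  moreover have "s \<bullet> (A *v s) = y j \<bullet> (A *v y j) + \<sigma>\<^sup>2 * curv j"
    using orth by (simp add: s quadratic_form_add_scaleR)
  moreover have "\<sigma>\<^sup>2 * curv j \<le> \<epsilon> * (norm s)\<^sup>2 + 2 * \<sigma> * (norm (r j))\<^sup>2"
    using boundary_curvature_bound[OF assms(1-3) stop[unfolded s]] s by simp
  ultimately show ?thesis
    using iterate_curvature_nonneg[OF assms(1)] by linarith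
qed

end

lemma matrix_vector_mult_add_scaleR_id:
  fixes H :: "real^'n^'n"
  shows "(H + c *\<^sub>R mat 1) *v v = H *v v + c *\<^sub>R v"
  by (simp add: matrix_vector_mult_add_rdistrib scaleR_matrix_vector_assoc[symmetric])

lemma cg_symmetric_add_scaleR_id:
  assumes "\<And>u v. u \<bullet> (H *v v) = v \<bullet> (H *v u)"
  shows "cg_symmetric (H + c *\<^sub>R mat 1)"
  by unfold_locales (simp add: matrix_vector_mult_add_scaleR_id inner_add_right assms inner_commute)

lemma cg_output_cases:
  fixes g :: "real^'n"
  assumes out: "cg_output g H \<epsilon> \<delta> \<zeta> capCG M s flag" and "0 \<le> \<epsilon>"
    and A: "A = H + (2 * \<epsilon>) *\<^sub>R mat 1"
  obtains (interior) N where "cg_positive_curvature g A N" "s = cg_y g A N"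
  | (boundary) j \<sigma> where "cg_positive_curvature g A j" "0 \<le> \<sigma>" "s = cg_y g A j + \<sigma> *\<^sub>R cg_p g A j"
      "cg_p g A j \<bullet> (A *v cg_p g A j) \<le> \<epsilon> * (norm (cg_p g A j))\<^sup>2
       \<or> (0 < cg_p g A j \<bullet> (A *v cg_p g A j) \<and> norm s \<le> norm (cg_y g A (Suc j)))"
proof -
  have curv_pos: "0 < cg_p g A i \<bullet> (A *v cg_p g A i)"
    if "\<not> cg_p g A i \<bullet> (A *v cg_p g A i) \<le> \<epsilon> * (norm (cg_p g A i))\<^sup>2" for i
  proof -
    have "0 \<le> \<epsilon> * (norm (cg_p g A i))\<^sup>2" using \<open>0 \<le> \<epsilon>\<close> by simp
    then show ?thesis using that by linarith
  qed
  have pos_if: "cg_positive_curvature g A j"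
    if "\<forall>i<j. \<not> (cg_p g A i \<bullet> (A *v cg_p g A i) \<le> \<epsilon> * (norm (cg_p g A i))\<^sup>2 \<or> R i)" for j R
    using that curv_pos unfolding cg_positive_curvature_def by blast
  from out show ?thesis
    unfolding cg_output_def Let_def A[symmetric]
  proof (elim disjE exE conjE, goal_cases)
    case (1 j \<sigma>)
    then show ?case by (intro boundary[of j \<sigma>] pos_if) auto
  next
    case (2 j \<sigma>)
    then show ?case by (intro boundary[of j \<sigma>] pos_if) (auto intro: curv_pos)
  next
    case (3 j)
    then have "cg_positive_curvature g A (Suc j)"
      using pos_if[OF 3(2)] curv_pos by (simp add: cg_positive_curvature_Suc)
    with 3 show ?case by (intro interior) auto
  next
    case 4
    define K where "K = cg_kmax CARD('n) \<epsilon> \<zeta> capCG M"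
    have "real i < K" if "i < nat \<lceil>K\<rceil>" for i
    proof -
      have "int i < \<lceil>K\<rceil>" using that by linarith
      then show ?thesis by (metis less_ceiling_iff of_int_of_nat_eq)
    qed
    then have "cg_positive_curvature g A (nat \<lceil>K\<rceil>)"
      using 4 curv_pos unfolding cg_positive_curvature_def K_def by blast
    with 4 show ?case by (intro interior) (simp_all add: K_def)
  qed
qed

lemma cg_output_model_decrease:
  fixes g :: "real^'n"
  assumes symH: "\<And>u v. u \<bullet> (H *v v) = v \<bullet> (H *v u)" and "0 < \<epsilon>"
    and out: "cg_output g H \<epsilon> \<delta> \<zeta> capCG M s flag"
  shows "\<epsilon> / 2 * (norm s)\<^sup>2 \<le> - (g \<bullet> s) - 1/2 * (s \<bullet> (H *v s))"
proof -
  define A where "A = H + (2 * \<epsilon>) *\<^sub>R mat 1"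
  interpret cg_symmetric g A
    unfolding A_def by (rule cg_symmetric_add_scaleR_id[OF symH])
  have shift: "s \<bullet> (H *v s) = s \<bullet> (A *v s) - 2 * \<epsilon> * (norm s)\<^sup>2"
    by (simp add: A_def matrix_vector_mult_add_scaleR_id inner_add_right power2_norm_eq_inner)
  have "0 \<le> \<epsilon> * (norm s)\<^sup>2" using \<open>0 < \<epsilon>\<close> by simp
  have "g \<bullet> s + 1/2 * (s \<bullet> (A *v s)) \<le> \<epsilon> / 2 * (norm s)\<^sup>2"
    using out less_imp_le[OF \<open>0 < \<epsilon>\<close>] A_def
  proof (cases rule: cg_output_cases)
    case (interior N)
    then show ?thesis
      using interior_model_nonpos[of N] \<open>0 \<le> \<epsilon> * (norm s)\<^sup>2\<close> by simp
  next
    case (boundary j \<sigma>)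
    then show ?thesis
      using boundary_model_bound[of j \<epsilon> \<sigma> s] \<open>0 < \<epsilon>\<close> by simp
  qed
  then show ?thesis using shift by linarith
qed

lemma meo_direction_model_decrease:
  assumes "meo_direction g H \<epsilon> \<delta> s"
  shows "\<epsilon> / 4 * (norm s)\<^sup>2 \<le> - (g \<bullet> s) - 1/2 * (s \<bullet> (H *v s))"
proof -
  from assms have "g \<bullet> s \<le> 0" and "s \<bullet> (H *v s) \<le> - (1/2) * \<epsilon> * (norm s)\<^sup>2"
    unfolding meo_direction_def by blast+
  then show ?thesis by linarith
qed

lemma alg4_step_model_decrease:
  assumes symH: "\<And>u v. u \<bullet> (H xk *v v) = v \<bullet> (H xk *v u)" and "0 < \<epsilon>H"
    and step: "alg4_step g H \<epsilon>g \<epsilon>H \<zeta> capCG M xk \<delta>k sk"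
  shows "\<epsilon>H / 4 * (norm sk)\<^sup>2 \<le> - (g xk \<bullet> sk) - 1/2 * (sk \<bullet> (H xk *v sk))"
proof -
  obtain sCG outCG where phase: "alg4_cg_phase (g xk) (H xk) \<epsilon>H \<delta>k \<zeta> capCG M sCG outCG"
    and choice: "if alg4_accept_cg (g xk) \<epsilon>g outCG then sk = sCG
      else meo_direction (g xk) (H xk) \<epsilon>H \<delta>k sk"
    using step unfolding alg4_step_def by blast
  consider (zero) "sk = 0"
    | (cg) "cg_output (g xk) (H xk) \<epsilon>H \<delta>k \<zeta> capCG M sk outCG"
    | (meo) "meo_direction (g xk) (H xk) \<epsilon>H \<delta>k sk"
    using phase choice unfolding alg4_cg_phase_def by (metis (full_types))
  then show ?thesis
  proof cases
    case zero
    then show ?thesis by simp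
  next
    case cg
    have "0 \<le> \<epsilon>H * (norm sk)\<^sup>2" using \<open>0 < \<epsilon>H\<close> by simp
    then show ?thesis
      using cg_output_model_decrease[OF symH \<open>0 < \<epsilon>H\<close> cg] by simp
  next
    case meo
    then show ?thesis by (rule meo_direction_model_decrease)
  qed
qed

theorem lemma4p1:
  fixes f :: "real^'n \<Rightarrow> real" and g :: "real^'n \<Rightarrow> real^'n" and H :: "real^'n \<Rightarrow> real^'n^'n"
    and \<epsilon>g \<epsilon>H \<gamma>1 \<gamma>2 \<psi> \<delta>0 \<delta>max \<eta> \<zeta> \<xi> M Lg :: real and x0 :: "real^'n" and capCG :: bool
    and x :: "nat \<Rightarrow> real^'n" and \<delta> :: "nat \<Rightarrow> real" and s :: "nat \<Rightarrow> real^'n" and K :: "nat set"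
  assumes grad: "\<And>y. (f has_derivative (\<lambda>h. g y \<bullet> h)) (at y)"
    and hess: "\<And>y. (g has_derivative (\<lambda>h. H y *v h)) (at y)"
    and hess_cont: "continuous_on UNIV H"
    and lip: "\<And>y z. norm (g y - g z) \<le> Lg * norm (y - z)"
    and "\<epsilon>g > 0" and "\<epsilon>H > 0"
    and "0 < \<gamma>1" and "\<gamma>1 < 1" and "\<gamma>2 \<ge> 1" and "1 / \<gamma>2 < \<psi>" and "\<psi> \<le> 1"
    and "\<delta>0 > 0" and "\<delta>max \<ge> \<delta>0"
    and "0 < \<eta>" and "\<eta> < 1" and "0 < \<zeta>" and "\<zeta> < 1" and "0 \<le> \<xi>" and "\<xi> < 1"
    and "M \<ge> Lg"
    and run: "alg4_run f g H \<epsilon>g \<epsilon>H \<gamma>1 \<gamma>2 \<psi> x0 \<delta>0 \<delta>max \<eta> \<zeta> capCG M x \<delta> s K"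
    and k: "k \<in> K"
  shows "tr_model f g H (x k) (x k) - tr_model f g H (x k) (x k + s k) \<ge> 1/4 * \<epsilon>H * (norm (s k))\<^sup>2"
proof -
  have "alg4_step g H \<epsilon>g \<epsilon>H \<zeta> capCG M (x k) (\<delta> k) (s k)"
    using run k unfolding alg4_run_def by blast
  moreover have "\<And>u v. u \<bullet> (H (x k) *v v) = v \<bullet> (H (x k) *v u)"
    by (rule second_derivative_symmetric[OF grad hess])
  ultimately have "\<epsilon>H / 4 * (norm (s k))\<^sup>2 \<le> - (g (x k) \<bullet> s k) - 1/2 * (s k \<bullet> (H (x k) *v s k))"
    using alg4_step_model_decrease \<open>\<epsilon>H > 0\<close> by blast
  then show ?thesis
    unfolding tr_model_def by simp
qed

end
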